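(* Let $F$ be a distribution function on $(0,1)$ with density $1+f$, where $f$ is 1-periodic, $f\in\mathbb{L}_2(0,1)$, $f(x)=\sum_{j=-\infty}^{\infty}\theta_j e^{2\pi ijx}$ with $\theta_0=0$. For an integer $m_n\ge1$ let $p_l=F(l/m_n)-F((l-1)/m_n)$, $1\le l\le m_n$, and $T_n(F)=nm_n\sum_{l=1}^{m_n}(p_l-1/m_n)^2$. Then $$n^{-1}m_n^{-1}T_n(F)=m_n\sum_{k=-\infty}^{\infty}\ \sum_{j\ne km_n}\frac{\theta_j\bar\theta_{j-km_n}}{4\pi^2j(j-km_n)}\big(2-2\cos(2\pi j/m_n)\big),$$ with the convention $0/0=0$.
   Context: $\bar z$ denotes the complex conjugate of $z$; the Fourier coefficients satisfy $\theta_{-j}=\bar\theta_j$. *)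

theory Defs
  imports "HOL-Analysis.Analysis"
begin

definition fourier_coeff :: "(real \<Rightarrow> real) \<Rightarrow> int \<Rightarrow> complex" where
  "fourier_coeff f j =
     (LINT x:{0..1}|lborel. complex_of_real (f x) * exp (- (2 * pi * of_int j * x) * \<i>))"

definition cell_prob :: "(real \<Rightarrow> real) \<Rightarrow> nat \<Rightarrow> nat \<Rightarrow> real" where
  "cell_prob F m l = F (real l / real m) - F ((real l - 1) / real m)"

definition T_stat :: "nat \<Rightarrow> nat \<Rightarrow> (real \<Rightarrow> real) \<Rightarrow> real" where
  "T_stat n m F = real n * real m * (\<Sum>l=1..m. (cell_prob F m l - 1 / real m)\<^sup>2)"

end

theory Submission
  imports Defs
begin

text \<open>Write \<open>G(x) = \<integral>\<^sub>0\<^sup>x f\<close> and \<open>e\<^sub>j(x) = exp(2\<pi>ijx)\<close>. Since \<open>F(x) = x + G(x)\<close>, the centred cell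
  probabilities are the increments \<open>p\<^sub>l - 1/m = G(l/m) - G((l-1)/m)\<close>. By Fubini, the Fourier
  coefficients of \<open>G\<close> of nonzero order are \<open>a\<^sub>j = \<theta>\<^sub>j / (2\<pi>ij)\<close>, and Bessel's inequality makes \<open>(a\<^sub>j)\<close>
  absolutely summable. A continuous \<open>h\<close> with \<open>h(0) = h(1)\<close> whose Fourier coefficients all vanish is
  zero, because it is a uniform limit of trigonometric polynomials (Stone-Weierstrass on the circle);
  since \<open>\<theta>\<^sub>0 = 0\<close> gives \<open>G(0) = G(1) = 0\<close>, it follows that \<open>G = \<Sum>\<^sub>j a\<^sub>j (e\<^sub>j - 1)\<close> on \<open>[0,1]\<close>.
  Squaring the increments and summing over the \<open>m\<close> cells, the geometric sums
  \<open>\<Sum>\<^sub>l e\<^sub>j\<^sub>-\<^sub>j\<^sub>'((l-1)/m)\<close> vanish unless \<open>m\<close> divides \<open>j - j'\<close>; writing \<open>j' = j - km\<close> gives the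
  double series.\<close>

section \<open>Complex exponentials\<close>

definition fourier_exp :: "int \<Rightarrow> real \<Rightarrow> complex" where
  "fourier_exp j x = exp (complex_of_real (2 * pi * real_of_int j * x) * \<i>)"

lemma fourier_exp_mult: "fourier_exp j x * fourier_exp k x = fourier_exp (j + k) x"
  unfolding fourier_exp_def by (simp add: exp_add[symmetric] algebra_simps)

lemma cnj_fourier_exp: "cnj (fourier_exp j x) = fourier_exp (- j) x"
  unfolding fourier_exp_def by (simp add: exp_cnj)

lemma fourier_exp_diff: "fourier_exp (j - k) x = fourier_exp j x * cnj (fourier_exp k x)"
  using fourier_exp_mult[of j x "- k"] by (simp add: cnj_fourier_exp)

lemma fourier_exp_add: "fourier_exp j (x + y) = fourier_exp j x * fourier_exp j y"
  unfolding fourier_exp_def by (simp add: exp_add[symmetric] algebra_simps)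

lemma norm_fourier_exp [simp]: "norm (fourier_exp j x) = 1"
  unfolding fourier_exp_def by (metis mult.commute norm_exp_i_times)

lemma fourier_exp_0 [simp]: "fourier_exp 0 x = 1"
  and fourier_exp_at_0 [simp]: "fourier_exp j 0 = 1"
  unfolding fourier_exp_def by simp_all

lemma fourier_exp_at_1 [simp]: "fourier_exp j 1 = 1"
  unfolding fourier_exp_def using exp_integer_2pi[of "real_of_int j"] by (simp add: mult_ac)

lemma fourier_exp_power: "fourier_exp j (real l * x) = fourier_exp j x ^ l"
proof (induction l)
  case (Suc l)
  have "fourier_exp j (real (Suc l) * x) = fourier_exp j (real l * x + x)"
    by (simp add: algebra_simps)
  then show ?case using Suc by (simp add: fourier_exp_add mult.commute)
qed simp

lemma fourier_exp_eq_1_iff: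
  assumes "m \<ge> (1::nat)"
  shows "fourier_exp d (1 / real m) = 1 \<longleftrightarrow> int m dvd d"
proof
  assume "fourier_exp d (1 / real m) = 1"
  then obtain n :: int where "2 * pi * real_of_int d * (1 / real m) = real_of_int (2 * n) * pi"
    unfolding fourier_exp_def exp_eq_1 by auto
  then have "real_of_int d = real_of_int n * real m"
    using assms by (simp add: field_simps)
  then have "d = n * int m" by (metis of_int_eq_iff of_int_mult of_int_of_nat_eq)
  then show "int m dvd d" by simp
next
  assume "int m dvd d"
  then obtain n where "d = int m * n" by blast
  then have "2 * pi * real_of_int d * (1 / real m) = 2 * real_of_int n * pi"
    using assms by (simp add: field_simps)
  then show "fourier_exp d (1 / real m) = 1"
    unfolding fourier_exp_def using exp_integer_2pi[of "real_of_int n"] by simp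
qed

lemma continuous_on_fourier_exp [continuous_intros]: "continuous_on S (fourier_exp j)"
  unfolding fourier_exp_def by (intro continuous_intros)

lemma has_vector_derivative_fourier_exp:
  "(fourier_exp j has_vector_derivative
     (complex_of_real (2 * pi * real_of_int j) * \<i> * fourier_exp j x)) (at x within S)"
proof -
  have "fourier_exp j = (\<lambda>x. exp (x *\<^sub>R (complex_of_real (2 * pi * real_of_int j) * \<i>)))"
    unfolding fourier_exp_def by (simp add: scaleR_conv_of_real algebra_simps)
  then show ?thesis
    using exp_scaleR_has_vector_derivative_right[of "complex_of_real (2 * pi * real_of_int j) * \<i>" x S]
    by (simp add: mult.commute)
qed

lemma has_integral_fourier_exp:
  assumes "a \<le> b" "j \<noteq> 0"
  shows "(fourier_exp j has_integral
     (fourier_exp j b - fourier_exp j a) / (complex_of_real (2 * pi * real_of_int j) * \<i>)) {a..b}"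
proof -
  define c where "c = complex_of_real (2 * pi * real_of_int j) * \<i>"
  have "c \<noteq> 0" using assms(2) by (simp add: c_def)
  then have "((\<lambda>x. fourier_exp j x / c) has_vector_derivative fourier_exp j x) (at x within {a..b})" for x
    using has_vector_derivative_divide[OF has_vector_derivative_fourier_exp[of j x "{a..b}"], of c]
    by (simp add: c_def)
  from fundamental_theorem_of_calculus[OF assms(1) this]
  show ?thesis by (simp add: c_def diff_divide_distrib)
qed

lemma has_integral_fourier_exp_01:
  "(fourier_exp j has_integral (if j = 0 then 1 else 0)) {0..1}"
proof (cases "j = 0")
  case True
  have "fourier_exp 0 = (\<lambda>_. 1)" by (simp add: fun_eq_iff)
  then show ?thesis using True has_integral_const_real[of "1::complex" 0 1] by simp
next
  case False
  then show ?thesis using has_integral_fourier_exp[of 0 1 j] by simp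
qed

lemma sum_fourier_exp_grid:
  assumes m: "m \<ge> (1::nat)"
  shows "(\<Sum>l=1..m. fourier_exp d ((real l - 1) / real m)) = (if int m dvd d then of_nat m else 0)"
proof -
  define w where "w = fourier_exp d (1 / real m)"
  have "(\<Sum>l=1..m. fourier_exp d ((real l - 1) / real m)) = (\<Sum>l<m. w ^ l)"
    unfolding w_def fourier_exp_power[symmetric] by (simp add: sum.atLeast1_atMost_eq)
  also have "\<dots> = (if int m dvd d then of_nat m else 0)"
  proof (cases "int m dvd d")
    case True
    then have "w = 1" using fourier_exp_eq_1_iff[OF m] by (simp add: w_def)
    then show ?thesis using True by simp
  next
    case False
    have "w ^ m = 1"
      unfolding w_def fourier_exp_power[symmetric] using m by simp
    with False show ?thesis
      using geometric_sum[of w m] fourier_exp_eq_1_iff[OF m] by (simp add: w_def)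
  qed
  finally show ?thesis .
qed

lemma fourier_exp_minus_1_mult_cnj:
  "(fourier_exp j x - 1) * cnj (fourier_exp j x - 1) =
     complex_of_real (2 - 2 * cos (2 * pi * real_of_int j * x))"
proof -
  have "(fourier_exp j x - 1) * cnj (fourier_exp j x - 1) =
      fourier_exp j x * cnj (fourier_exp j x) - (fourier_exp j x + cnj (fourier_exp j x)) + 1"
    by (simp add: algebra_simps)
  also have "fourier_exp j x * cnj (fourier_exp j x) = 1"
    using complex_norm_square[of "fourier_exp j x"] by simp
  also have "fourier_exp j x + cnj (fourier_exp j x) = complex_of_real (2 * cos (2 * pi * real_of_int j * x))"
    unfolding complex_add_cnj fourier_exp_def by (simp add: Re_exp)
  finally show ?thesis by simp
qed

section \<open>Trigonometric polynomials and uniqueness of Fourier coefficients\<close>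

inductive trig_poly :: "(real \<Rightarrow> complex) \<Rightarrow> bool" where
  monomial: "trig_poly (\<lambda>x. c * fourier_exp j x)"
| add: "trig_poly p \<Longrightarrow> trig_poly q \<Longrightarrow> trig_poly (\<lambda>x. p x + q x)"

lemma trig_poly_const: "trig_poly (\<lambda>x. c)"
  using trig_poly.monomial[of c 0] by simp

lemma trig_poly_mult_monomial:
  "trig_poly p \<Longrightarrow> trig_poly (\<lambda>x. c * fourier_exp j x * p x)"
proof (induction rule: trig_poly.induct)
  case (monomial d k)
  then show ?case
    using trig_poly.monomial[of "c * d" "j + k"] by (simp add: fourier_exp_mult[symmetric] mult_ac)
next
  case (add p q)
  then show ?case using trig_poly.add by (simp add: distrib_left)
qed

lemma trig_poly_mult: "trig_poly p \<Longrightarrow> trig_poly q \<Longrightarrow> trig_poly (\<lambda>x. p x * q x)"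
proof (induction rule: trig_poly.induct)
  case (monomial c j)
  then show ?case by (rule trig_poly_mult_monomial)
next
  case (add p p')
  then show ?case using trig_poly.add by (simp add: distrib_right)
qed

lemma trig_poly_cnj: "trig_poly p \<Longrightarrow> trig_poly (\<lambda>x. cnj (p x))"
proof (induction rule: trig_poly.induct)
  case (monomial c j)
  then show ?case using trig_poly.monomial[of "cnj c" "- j"] by (simp add: cnj_fourier_exp)
next
  case (add p q)
  then show ?case using trig_poly.add by simp
qed

lemma trig_poly_real_polynomial_function:
  assumes "real_polynomial_function p"
  shows "trig_poly (\<lambda>x. complex_of_real (p (fourier_exp 1 x)))"
  using assms
proof (induction rule: real_polynomial_function.induct)
  case (linear p)
  then interpret bounded_linear p .
  define A where "A = (complex_of_real (p 1) - \<i> * complex_of_real (p \<i>)) / 2"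
  define B where "B = (complex_of_real (p 1) + \<i> * complex_of_real (p \<i>)) / 2"
  have "complex_of_real (p z) = A * z + B * cnj z" for z
  proof -
    have "z = Re z *\<^sub>R 1 + Im z *\<^sub>R \<i>" by (simp add: complex_eq_iff)
    then have "p z = p (Re z *\<^sub>R 1 + Im z *\<^sub>R \<i>)" by simp
    then have "p z = Re z * p 1 + Im z * p \<i>" by (simp add: add scale)
    then show ?thesis
      by (simp add: A_def B_def complex_eq_iff algebra_simps) argo
  qed
  then have "(\<lambda>x. complex_of_real (p (fourier_exp 1 x))) =
      (\<lambda>x. A * fourier_exp 1 x + B * fourier_exp (-1) x)"
    by (simp add: cnj_fourier_exp)
  then show ?case by (simp add: trig_poly.intros)
qed (auto intro: trig_poly_const trig_poly.add trig_poly_mult)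

lemma has_integral_mult_trig_poly_eq_0:
  assumes "\<And>k. ((\<lambda>x. h x * fourier_exp k x) has_integral 0) {0..1}" and "trig_poly p"
  shows "((\<lambda>x. h x * p x) has_integral 0) {0..1}"
  using assms(2)
proof (induction rule: trig_poly.induct)
  case (monomial c j)
  show ?case using has_integral_mult_right[OF assms(1)[of j], of c] by (simp add: mult_ac)
next
  case (add p q)
  then show ?case using has_integral_add[OF add.IH] by (simp add: distrib_left)
qed

lemma fourier_exp_1_eq_imp:
  assumes "x \<in> {0..1}" "y \<in> {0..1}" "fourier_exp 1 x = fourier_exp 1 y"
  shows "x = y \<or> {x, y} = {0, 1}"
proof -
  have "fourier_exp 1 (x - y) * fourier_exp 1 y = fourier_exp 1 y"
    using assms(3) fourier_exp_add[of 1 "x - y" y] by simp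
  then have "fourier_exp 1 (x - y) = 1"
    using norm_fourier_exp[of 1 y] by (metis mult_cancel_right1 norm_zero zero_neq_one)
  then obtain n :: int where "2 * pi * (x - y) = real_of_int (2 * n) * pi"
    unfolding fourier_exp_def exp_eq_1 by auto
  then have "(2 * pi) * (x - y) = (2 * pi) * real_of_int n" by (simp add: algebra_simps)
  then have n: "x - y = real_of_int n" by simp
  then have "\<bar>n\<bar> \<le> 1" using assms(1,2) by auto
  then have "n = 0 \<or> n = 1 \<or> n = -1" by auto
  then show ?thesis using n assms(1,2) by auto
qed

lemma continuous_periodic_factors_through_circle:
  fixes h :: "real \<Rightarrow> real"
  assumes cont: "continuous_on {0..1} h" and per: "h 0 = h 1"
  obtains g where "continuous_on (fourier_exp 1 ` {0..1}) g"
    and "\<And>x. x \<in> {0..1} \<Longrightarrow> g (fourier_exp 1 x) = h x"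
proof
  define g where "g z = h (SOME x. x \<in> {0..1} \<and> fourier_exp 1 x = z)" for z
  show g: "g (fourier_exp 1 x) = h x" if "x \<in> {0..1}" for x
  proof -
    define y where "y = (SOME y. y \<in> {0..1} \<and> fourier_exp 1 y = fourier_exp 1 x)"
    have "y \<in> {0..1}" "fourier_exp 1 y = fourier_exp 1 x"
      using someI_ex[of "\<lambda>y. y \<in> {0..1} \<and> fourier_exp 1 y = fourier_exp 1 x"] that
      unfolding y_def by auto
    then have "h y = h x" using fourier_exp_1_eq_imp[of y x] that per by (auto simp: doubleton_eq_iff)
    then show ?thesis unfolding g_def y_def[symmetric] .
  qed
  have quot: "quotient_map (top_of_set {0..1}) (top_of_set (fourier_exp 1 ` {0..1})) (fourier_exp 1)"
  proof (rule continuous_imp_quotient_map)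
    show "continuous_map (top_of_set {0..1}) (top_of_set (fourier_exp 1 ` {0..1})) (fourier_exp 1)"
      unfolding continuous_map_subtopology_eu by (auto intro: continuous_on_fourier_exp)
    show "compact_space (top_of_set {0..1::real})"
      by (simp add: compact_space_subtopology)
    show "Hausdorff_space (top_of_set (fourier_exp 1 ` {0..1}))"
      by (simp add: Hausdorff_space_subtopology)
  qed simp
  have comp: "continuous_map (top_of_set {0..1}) euclideanreal (g \<circ> fourier_exp 1)"
  proof (rule continuous_map_eq)
    show "continuous_map (top_of_set {0..1}) euclideanreal h"
      using cont by simp
  qed (simp add: g)
  show "continuous_on (fourier_exp 1 ` {0..1}) g"
    using continuous_compose_quotient_map[OF quot comp] by simp
qed

lemma trig_poly_approximation_real:
  fixes h :: "real \<Rightarrow> real"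
  assumes "continuous_on {0..1} h" "h 0 = h 1" "e > 0"
  obtains P where "trig_poly P" "\<And>x. x \<in> {0..1} \<Longrightarrow> cmod (complex_of_real (h x) - P x) < e"
proof -
  obtain g where g: "continuous_on (fourier_exp 1 ` {0..1}) g"
    "\<And>x. x \<in> {0..1} \<Longrightarrow> g (fourier_exp 1 x) = h x"
    using continuous_periodic_factors_through_circle[OF assms(1,2)] by blast
  have "compact (fourier_exp 1 ` {0..1})"
    by (intro compact_continuous_image continuous_on_fourier_exp) auto
  then obtain p where p: "real_polynomial_function p"
    "\<And>z. z \<in> fourier_exp 1 ` {0..1} \<Longrightarrow> \<bar>g z - p z\<bar> < e"
    using Stone_Weierstrass_real_polynomial_function[OF _ g(1) assms(3)] by blast
  show ?thesis
  proof
    show "trig_poly (\<lambda>x. complex_of_real (p (fourier_exp 1 x)))"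
      by (rule trig_poly_real_polynomial_function[OF p(1)])
    show "cmod (complex_of_real (h x) - complex_of_real (p (fourier_exp 1 x))) < e"
      if "x \<in> {0..1}" for x
      using p(2)[of "fourier_exp 1 x"] g(2)[OF that] that
      by (simp flip: of_real_diff)
  qed
qed

lemma trig_poly_approximation:
  fixes h :: "real \<Rightarrow> complex"
  assumes cont: "continuous_on {0..1} h" and per: "h 0 = h 1" and e: "e > 0"
  obtains P where "trig_poly P" "\<And>x. x \<in> {0..1} \<Longrightarrow> cmod (h x - P x) < e"
proof -
  obtain P1 where P1: "trig_poly P1" "\<And>x. x \<in> {0..1} \<Longrightarrow> cmod (of_real (Re (h x)) - P1 x) < e / 2"
    using trig_poly_approximation_real[OF continuous_on_Re[OF cont], of "e / 2"] per e by auto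
  obtain P2 where P2: "trig_poly P2" "\<And>x. x \<in> {0..1} \<Longrightarrow> cmod (of_real (Im (h x)) - P2 x) < e / 2"
    using trig_poly_approximation_real[OF continuous_on_Im[OF cont], of "e / 2"] per e by auto
  show ?thesis
  proof
    show "trig_poly (\<lambda>x. P1 x + \<i> * P2 x)"
      using P1(1) P2(1) by (intro trig_poly.add trig_poly_mult trig_poly_const)
    fix x :: real assume x: "x \<in> {0..1}"
    have "h x - (P1 x + \<i> * P2 x) = (of_real (Re (h x)) - P1 x) + \<i> * (of_real (Im (h x)) - P2 x)"
      by (simp add: complex_eq_iff algebra_simps)
    also have "cmod \<dots> \<le> cmod (of_real (Re (h x)) - P1 x) + cmod (of_real (Im (h x)) - P2 x)"
      using norm_triangle_ineq[of "of_real (Re (h x)) - P1 x" "\<i> * (of_real (Im (h x)) - P2 x)"]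
      by (simp add: norm_mult)
    also have "\<dots> < e" using P1(2)[OF x] P2(2)[OF x] by simp
    finally show "cmod (h x - (P1 x + \<i> * P2 x)) < e" .
  qed
qed

text \<open>Orthogonality of \<open>h\<close> to \<open>P\<close> gives \<open>\<integral>|h|\<^sup>2 = \<integral>h (h - P)\<^sup>*\<close>.\<close>
lemma integral_norm_sq_le_trig_poly_dist:
  fixes h :: "real \<Rightarrow> complex"
  assumes cont: "continuous_on {0..1} h"
    and coeffs: "\<And>k. ((\<lambda>x. h x * fourier_exp k x) has_integral 0) {0..1}"
    and P: "trig_poly P" and close: "\<And>x. x \<in> {0..1} \<Longrightarrow> cmod (h x - P x) \<le> e"
  shows "integral {0..1} (\<lambda>x. (cmod (h x))\<^sup>2) \<le> integral {0..1} (\<lambda>x. cmod (h x)) * e"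
proof -
  define I where "I = integral {0..1} (\<lambda>x. (cmod (h x))\<^sup>2)"
  have sq: "((\<lambda>x. (cmod (h x))\<^sup>2) has_integral I) {0..1}"
    unfolding I_def by (intro integrable_integral integrable_continuous_real continuous_intros cont)
  have hP: "((\<lambda>x. h x * cnj (P x)) has_integral 0) {0..1}"
    by (rule has_integral_mult_trig_poly_eq_0[OF coeffs trig_poly_cnj[OF P]])
  have hh: "((\<lambda>x. h x * cnj (h x)) has_integral complex_of_real I) {0..1}"
    using has_integral_of_real[OF sq, where 'b = complex] by (simp only: complex_norm_square)
  have "((\<lambda>x. h x * cnj (h x) - h x * cnj (P x)) has_integral complex_of_real I - 0) {0..1}"
    by (rule has_integral_diff[OF hh hP])
  then have diff: "((\<lambda>x. h x * cnj (h x - P x)) has_integral complex_of_real I) {0..1}"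
    by (simp add: right_diff_distrib)
  have bound: "((\<lambda>x. cmod (h x) * e) has_integral integral {0..1} (\<lambda>x. cmod (h x)) * e) {0..1}"
    by (intro has_integral_mult_left integrable_integral integrable_continuous_real
        continuous_intros cont)
  have "norm (h x * cnj (h x - P x)) \<le> (cmod (h x) * e) \<bullet> 1" if "x \<in> {0..1}" for x
    using close[OF that] mult_left_mono[of "cmod (h x - P x)" e "cmod (h x)"]
    by (simp only: norm_mult complex_mod_cnj inner_real_def) simp
  then have "norm (complex_of_real I) \<le> (integral {0..1} (\<lambda>x. cmod (h x)) * e) \<bullet> 1"
    by (rule has_integral_norm_bound_integral_component[OF diff bound])
  then show ?thesis by (simp add: I_def)
qed

lemma fourier_coeffs_eq_0_imp_eq_0:
  fixes h :: "real \<Rightarrow> complex"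
  assumes cont: "continuous_on {0..1} h" and per: "h 0 = h 1"
    and coeffs: "\<And>k. ((\<lambda>x. h x * fourier_exp k x) has_integral 0) {0..1}"
    and x: "x \<in> {0..1}"
  shows "h x = 0"
proof -
  define I where "I = integral {0..1} (\<lambda>x. (cmod (h x))\<^sup>2)"
  define M where "M = integral {0..1} (\<lambda>x. cmod (h x))"
  have sq_cont: "continuous_on {0..1} (\<lambda>x. (cmod (h x))\<^sup>2)"
    by (intro continuous_intros cont)
  then have sq: "((\<lambda>x. (cmod (h x))\<^sup>2) has_integral I) {0..1}"
    unfolding I_def by (intro integrable_integral integrable_continuous_real)
  have "M \<ge> 0"
    unfolding M_def by (intro integral_nonneg integrable_continuous_real continuous_intros cont) simp
  have I_le: "I \<le> M * e" if "e > 0" for e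
  proof -
    obtain P where "trig_poly P" "\<And>x. x \<in> {0..1} \<Longrightarrow> cmod (h x - P x) < e"
      using trig_poly_approximation[OF cont per \<open>e > 0\<close>] by blast
    then show ?thesis
      unfolding I_def M_def
      by (intro integral_norm_sq_le_trig_poly_dist[OF cont coeffs]) (auto intro: less_imp_le)
  qed
  have "I \<le> 0"
  proof (rule ccontr)
    assume "\<not> I \<le> 0"
    then have "I \<le> M * (I / (M + 1))" using I_le[of "I / (M + 1)"] \<open>M \<ge> 0\<close> by simp
    also have "\<dots> < I" using \<open>\<not> I \<le> 0\<close> \<open>M \<ge> 0\<close> by (simp add: field_simps)
    finally show False by simp
  qed
  moreover have "I \<ge> 0" using sq by (rule has_integral_nonneg) simp
  ultimately have "((\<lambda>x. (cmod (h x))\<^sup>2) has_integral 0) {0..1}"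
    using sq by simp
  then have "(cmod (h x))\<^sup>2 = 0"
    using has_integral_0_cbox_imp_0[of 0 1 "\<lambda>x. (cmod (h x))\<^sup>2" x] x sq_cont by auto
  then show ?thesis by simp
qed

section \<open>Bessel's inequality\<close>

lemma square_integrable_imp_integrable_01:
  fixes f :: "real \<Rightarrow> real"
  assumes [measurable]: "f \<in> borel_measurable lborel"
    and L2: "set_integrable lborel {0..1} (\<lambda>x. (f x)\<^sup>2)"
  shows "set_integrable lborel {0..1} f"
proof (rule set_integrable_bound[of _ _ "\<lambda>x. 1 + (f x)\<^sup>2"])
  have "set_integrable lborel {0..1::real} (\<lambda>_. 1::real)"
    unfolding set_integrable_def by (rule borel_integrable_compact) auto
  then show "set_integrable lborel {0..1} (\<lambda>x. 1 + (f x)\<^sup>2)"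
    using L2 by (rule set_integral_add(1))
  show "set_borel_measurable lborel {0..1} f"
    unfolding set_borel_measurable_def by measurable
  have "\<bar>y\<bar> \<le> 1 + y\<^sup>2" for y :: real
  proof (cases "\<bar>y\<bar> \<le> 1")
    case False
    then have "\<bar>y\<bar> * 1 \<le> \<bar>y\<bar> * \<bar>y\<bar>" by (intro mult_left_mono) auto
    then show ?thesis by (simp add: power2_eq_square)
  qed (simp add: add_increasing2)
  then show "AE x in lborel. x \<in> {0..1} \<longrightarrow> norm (f x) \<le> norm (1 + (f x)\<^sup>2)"
    by simp
qed

lemma has_integral_norm_sq_trig_sum:
  assumes "finite J"
  shows "((\<lambda>x. (cmod (\<Sum>j\<in>J. c j * fourier_exp j x))\<^sup>2) has_integral (\<Sum>j\<in>J. (cmod (c j))\<^sup>2)) {0..1}"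
proof -
  have "((\<lambda>x. \<Sum>j\<in>J. \<Sum>k\<in>J. c j * cnj (c k) * fourier_exp (j - k) x) has_integral
         (\<Sum>j\<in>J. \<Sum>k\<in>J. c j * cnj (c k) * (if j - k = 0 then 1 else 0))) {0..1}"
    using assms by (intro has_integral_sum has_integral_mult_right has_integral_fourier_exp_01)
  moreover have "(\<Sum>j\<in>J. \<Sum>k\<in>J. c j * cnj (c k) * (if j - k = 0 then 1 else 0)) =
      complex_of_real (\<Sum>j\<in>J. (cmod (c j))\<^sup>2)"
    using assms by (simp add: if_distrib complex_norm_square del: of_real_power cong: if_cong)
  moreover have "(\<Sum>j\<in>J. \<Sum>k\<in>J. c j * cnj (c k) * fourier_exp (j - k) x) =
      complex_of_real ((cmod (\<Sum>j\<in>J. c j * fourier_exp j x))\<^sup>2)" for x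
    unfolding complex_norm_square cnj_sum sum_product
    by (intro sum.cong refl) (simp add: fourier_exp_diff mult_ac)
  ultimately have "((\<lambda>x. complex_of_real ((cmod (\<Sum>j\<in>J. c j * fourier_exp j x))\<^sup>2)) has_integral
      complex_of_real (\<Sum>j\<in>J. (cmod (c j))\<^sup>2)) {0..1}"
    by simp
  from has_integral_linear[OF this bounded_linear_Re] show ?thesis
    by (simp add: o_def)
qed

lemma fourier_coeff_eq_set_integral:
  "fourier_coeff f j = (CLINT x:{0..1}|lborel. complex_of_real (f x) * fourier_exp (- j) x)"
  unfolding fourier_coeff_def fourier_exp_def by (simp add: algebra_simps)

context
  fixes f :: "real \<Rightarrow> real"
  assumes meas [measurable]: "f \<in> borel_measurable lborel"
    and int: "set_integrable lborel {0..1} f"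
begin

lemma set_integrable_mult_continuous:
  fixes c :: "real \<Rightarrow> 'b::{real_normed_algebra_1, banach, second_countable_topology}"
  assumes "continuous_on UNIV c"
  shows "set_integrable lborel {0..1} (\<lambda>x. of_real (f x) * c x)"
proof -
  have "bounded (c ` {0..1})"
    using assms by (intro compact_imp_bounded compact_continuous_image continuous_on_subset[OF assms]) auto
  then obtain C where C: "\<forall>x\<in>{0..1}. norm (c x) \<le> C"
    by (auto simp: bounded_iff)
  have [measurable]: "c \<in> borel_measurable lborel"
    using borel_measurable_continuous_onI[OF assms] by simp
  show ?thesis
  proof (rule set_integrable_bound[of _ _ "\<lambda>x. C * f x"])
    show "set_integrable lborel {0..1} (\<lambda>x. C * f x)"
      using int by simp
    show "set_borel_measurable lborel {0..1} (\<lambda>x. of_real (f x) * c x)"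
      unfolding set_borel_measurable_def by measurable
    have "norm (of_real (f x) * c x) \<le> norm (C * f x)" if "x \<in> {0..1}" for x
    proof -
      have "norm (of_real (f x) * c x) = \<bar>f x\<bar> * norm (c x)"
        by (simp flip: scaleR_conv_of_real)
      also have "\<dots> \<le> \<bar>f x\<bar> * \<bar>C\<bar>"
        using C that by (intro mult_left_mono) force+
      finally show ?thesis by (simp add: abs_mult mult.commute)
    qed
    then show "AE x in lborel. x \<in> {0..1} \<longrightarrow> norm (of_real (f x) * c x) \<le> norm (C * f x)"
      by simp
  qed
qed

lemma integrable_on_mult_fourier_exp:
  "(\<lambda>x. complex_of_real (f x) * fourier_exp j x) integrable_on {0..1}"
  using set_integrable_mult_continuous[OF continuous_on_fourier_exp] set_borel_integral_eq_integral
  by blast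

lemma fourier_coeff_eq_integral:
  "fourier_coeff f j = integral {0..1} (\<lambda>x. complex_of_real (f x) * fourier_exp (- j) x)"
proof -
  have "fourier_coeff f j = (CLINT x:{0..1}|lborel. complex_of_real (f x) * fourier_exp (- j) x)"
    by (rule fourier_coeff_eq_set_integral)
  also have "\<dots> = integral {0..1} (\<lambda>x. complex_of_real (f x) * fourier_exp (- j) x)"
    using set_integrable_mult_continuous[OF continuous_on_fourier_exp] set_borel_integral_eq_integral
    by blast
  finally show ?thesis .
qed

lemma cnj_fourier_coeff_eq_integral:
  "cnj (fourier_coeff f j) = integral {0..1} (\<lambda>x. complex_of_real (f x) * fourier_exp j x)"
  unfolding fourier_coeff_eq_integral integral_cnj by (simp add: cnj_fourier_exp)

lemma bessel_inequality:
  assumes L2: "set_integrable lborel {0..1} (\<lambda>x. (f x)\<^sup>2)" and "finite J"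
  shows "(\<Sum>j\<in>J. (cmod (fourier_coeff f j))\<^sup>2) \<le> integral {0..1} (\<lambda>x. (f x)\<^sup>2)"
proof -
  define P where "P x = (\<Sum>j\<in>J. fourier_coeff f j * fourier_exp j x)" for x
  define s where "s = (\<Sum>j\<in>J. (cmod (fourier_coeff f j))\<^sup>2)"
  define A where "A = integral {0..1} (\<lambda>x. (f x)\<^sup>2)"
  have "((\<lambda>x. complex_of_real (f x) * fourier_exp j x) has_integral cnj (fourier_coeff f j)) {0..1}"
    for j
    unfolding cnj_fourier_coeff_eq_integral using integrable_on_mult_fourier_exp
    by (rule integrable_integral)
  then have "((\<lambda>x. \<Sum>j\<in>J. fourier_coeff f j * (complex_of_real (f x) * fourier_exp j x)) has_integral
      (\<Sum>j\<in>J. fourier_coeff f j * cnj (fourier_coeff f j))) {0..1}"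
    using \<open>finite J\<close> by (intro has_integral_sum has_integral_mult_right)
  then have "((\<lambda>x. complex_of_real (f x) * P x) has_integral complex_of_real s) {0..1}"
    unfolding P_def s_def
    by (simp add: sum_distrib_left mult_ac complex_norm_square del: of_real_power)
  from has_integral_linear[OF this bounded_linear_Re]
  have fP: "((\<lambda>x. f x * Re (P x)) has_integral s) {0..1}"
    by (simp add: o_def)
  have PP: "((\<lambda>x. (cmod (P x))\<^sup>2) has_integral s) {0..1}"
    unfolding P_def s_def using \<open>finite J\<close> by (rule has_integral_norm_sq_trig_sum)
  have ff: "((\<lambda>x. (f x)\<^sup>2) has_integral A) {0..1}"
    unfolding A_def using L2 set_borel_integral_eq_integral(1) by blast
  have "((\<lambda>x. (f x)\<^sup>2 - 2 * (f x * Re (P x)) + (cmod (P x))\<^sup>2) has_integral A - 2 * s + s) {0..1}"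
    by (intro has_integral_add has_integral_diff has_integral_mult_right ff fP PP)
  moreover have "(f x)\<^sup>2 - 2 * (f x * Re (P x)) + (cmod (P x))\<^sup>2 = (cmod (complex_of_real (f x) - P x))\<^sup>2"
    for x
    by (simp add: cmod_power2 power2_diff algebra_simps)
  ultimately have "((\<lambda>x. (cmod (complex_of_real (f x) - P x))\<^sup>2) has_integral A - s) {0..1}"
    by simp
  then have "0 \<le> A - s" by (rule has_integral_nonneg) simp
  then show ?thesis unfolding A_def s_def by simp
qed

lemma summable_on_fourier_coeff_sq:
  assumes "set_integrable lborel {0..1} (\<lambda>x. (f x)\<^sup>2)"
  shows "(\<lambda>j. (cmod (fourier_coeff f j))\<^sup>2) summable_on UNIV"
  using bessel_inequality[OF assms]
  by (intro nonneg_bdd_above_summable_on bdd_aboveI[of _ "integral {0..1} (\<lambda>x. (f x)\<^sup>2)"]) auto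

end

section \<open>The antiderivative and its Fourier series\<close>

lemma summable_on_inverse_power2_int: "(\<lambda>j::int. inverse ((real_of_int j)\<^sup>2)) summable_on UNIV"
proof -
  have nat: "(\<lambda>n::nat. inverse ((real n)\<^sup>2)) summable_on UNIV"
    using inverse_power_summable[of 2, where 'a = real]
    by (subst summable_on_UNIV_nonneg_real_iff) auto
  have pos: "(\<lambda>j::int. inverse ((real_of_int j)\<^sup>2)) summable_on range int"
    by (subst summable_on_reindex) (use nat in \<open>auto simp: o_def inj_on_def\<close>)
  have neg: "(\<lambda>j::int. inverse ((real_of_int j)\<^sup>2)) summable_on range (\<lambda>n. - int n)"
    by (subst summable_on_reindex) (use nat in \<open>auto simp: o_def inj_on_def\<close>)
  have "j \<in> range int \<union> range (\<lambda>n. - int n)" for j :: int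
  proof (cases "j \<ge> 0")
    case True then show ?thesis by (intro UnI1 image_eqI[of _ _ "nat j"]) auto
  next
    case False then show ?thesis by (intro UnI2 image_eqI[of _ _ "nat (- j)"]) auto
  qed
  then have "range int \<union> range (\<lambda>n. - int n) = (UNIV :: int set)" by blast
  with summable_on_union[OF pos neg] show ?thesis by simp
qed

text \<open>When \<open>\<theta>\<^sub>0 = 0\<close>, for \<open>j \<noteq> 0\<close> this is the \<open>j\<close>-th Fourier coefficient of the antiderivative of
  \<open>f\<close>; the value at \<open>j = 0\<close> is \<open>0\<close> because division by zero yields zero.\<close>
definition antideriv_coeff :: "(real \<Rightarrow> real) \<Rightarrow> int \<Rightarrow> complex" where
  "antideriv_coeff f j = fourier_coeff f j / (complex_of_real (2 * pi * real_of_int j) * \<i>)"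

lemma antideriv_coeff_0 [simp]: "antideriv_coeff f 0 = 0"
  unfolding antideriv_coeff_def by simp

lemma antideriv_coeff_mult_cnj:
  "antideriv_coeff f j * cnj (antideriv_coeff f j') =
     fourier_coeff f j * cnj (fourier_coeff f j') /
       complex_of_real (4 * pi\<^sup>2 * real_of_int j * real_of_int j')"
proof (cases "j = 0 \<or> j' = 0")
  case False
  then show ?thesis
    unfolding antideriv_coeff_def by (simp add: field_simps power2_eq_square)
qed (auto simp: antideriv_coeff_def)

text \<open>Bessel's inequality and \<open>|\<theta>\<^sub>j| / |j| \<le> |\<theta>\<^sub>j|\<^sup>2 + j\<^sup>-\<^sup>2\<close>.\<close>
lemma abs_summable_antideriv_coeff:
  fixes f :: "real \<Rightarrow> real"
  assumes meas: "f \<in> borel_measurable lborel" and L2: "set_integrable lborel {0..1} (\<lambda>x. (f x)\<^sup>2)"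
  shows "(\<lambda>j. norm (antideriv_coeff f j)) summable_on UNIV"
proof (rule Infinite_Sum.abs_summable_on_comparison_test')
  have "set_integrable lborel {0..1} f"
    using meas L2 by (rule square_integrable_imp_integrable_01)
  from summable_on_fourier_coeff_sq[OF meas this L2] summable_on_inverse_power2_int
  show "(\<lambda>j. (cmod (fourier_coeff f j))\<^sup>2 + inverse ((real_of_int j)\<^sup>2)) summable_on UNIV"
    by (rule summable_on_add)
  fix j :: int
  show "norm (antideriv_coeff f j) \<le> (cmod (fourier_coeff f j))\<^sup>2 + inverse ((real_of_int j)\<^sup>2)"
  proof (cases "j = 0")
    case False
    define t where "t = cmod (fourier_coeff f j)"
    define y where "y = inverse \<bar>real_of_int j\<bar>"
    have "norm (antideriv_coeff f j) = t / (2 * pi * \<bar>real_of_int j\<bar>)"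
      unfolding antideriv_coeff_def t_def by (simp add: norm_divide norm_mult abs_mult)
    also have "\<dots> \<le> t / \<bar>real_of_int j\<bar>"
      using False pi_gt3 by (intro divide_left_mono) (auto simp: t_def)
    also have "\<dots> = t * y"
      unfolding y_def by (simp add: divide_inverse)
    also have "\<dots> \<le> t\<^sup>2 + y\<^sup>2"
    proof -
      have "2 * (t * y) \<le> t\<^sup>2 + y\<^sup>2" using sum_squares_bound[of t y] by (simp add: mult.assoc)
      moreover have "0 \<le> t * y" by (simp add: t_def y_def)
      ultimately show ?thesis by linarith
    qed
    also have "y\<^sup>2 = inverse ((real_of_int j)\<^sup>2)"
      unfolding y_def by (simp add: power_inverse)
    finally show ?thesis unfolding t_def .
  qed simp
qed

definition antideriv :: "(real \<Rightarrow> real) \<Rightarrow> real \<Rightarrow> real" where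
  "antideriv f x = (LINT t:{0..x}|lborel. f t)"

context
  fixes f :: "real \<Rightarrow> real"
  assumes meas [measurable]: "f \<in> borel_measurable lborel"
    and int: "set_integrable lborel {0..1} f"
begin

lemma antideriv_eq_integral: "x \<in> {0..1} \<Longrightarrow> antideriv f x = integral {0..x} f"
  unfolding antideriv_def
  by (rule set_borel_integral_eq_integral(2), rule set_integrable_subset[OF int]) auto

lemma continuous_on_antideriv: "continuous_on {0..1} (antideriv f)"
proof -
  have "f integrable_on {0..1}" using int set_borel_integral_eq_integral(1) by blast
  from indefinite_integral_continuous_1[OF this] show ?thesis
    by (rule continuous_on_cong[THEN iffD1, rotated 2]) (auto simp: antideriv_eq_integral)
qed

lemma antideriv_0 [simp]: "antideriv f 0 = 0"
  using antideriv_eq_integral[of 0] by simp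

lemma antideriv_1: "complex_of_real (antideriv f 1) = fourier_coeff f 0"
  unfolding fourier_coeff_def antideriv_def by (simp add: set_integral_complex_of_real)

lemma integrable_antideriv_kernel:
  fixes g :: "real \<Rightarrow> complex"
  assumes g: "continuous_on UNIV g"
  shows "integrable (lborel \<Otimes>\<^sub>M lborel)
    (\<lambda>(x, t). if 0 \<le> t \<and> t \<le> x \<and> x \<le> 1 then complex_of_real (f t) * g x else 0)"
proof -
  have "bounded (g ` {0..1})"
    using g by (intro compact_imp_bounded compact_continuous_image continuous_on_subset[OF g]) auto
  then obtain C where C: "\<forall>x\<in>{0..1}. norm (g x) \<le> C"
    by (auto simp: bounded_iff)
  have [measurable]: "g \<in> borel_measurable borel"
    using borel_measurable_continuous_onI[OF g] by simp
  define B where "B x t = indicator {0..1::real} x * (indicator {0..1::real} t * \<bar>f t\<bar>) * C" for x t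
  have f_abs: "integrable lborel (\<lambda>t. indicator {0..1::real} t * \<bar>f t\<bar>)"
    using set_integrable_abs[OF int] unfolding set_integrable_def by simp
  have B_int: "integrable (lborel \<Otimes>\<^sub>M lborel) (\<lambda>(x, t). B x t)"
  proof (rule lborel_pair.Fubini_integrable)
    show "(\<lambda>(x, t). B x t) \<in> borel_measurable (lborel \<Otimes>\<^sub>M lborel)"
      unfolding B_def by measurable
    have "(\<lambda>x. LBINT t. norm (B x t)) =
        (\<lambda>x. indicator {0..1::real} x * (LBINT t. indicator {0..1::real} t * \<bar>f t\<bar>) * \<bar>C\<bar>)"
      unfolding B_def by (simp add: abs_mult)
    moreover have "integrable lborel
        (\<lambda>x. indicator {0..1::real} x * (LBINT t. indicator {0..1::real} t * \<bar>f t\<bar>) * \<bar>C\<bar>)"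
      by (intro integrable_mult_left integrable_real_indicator) auto
    ultimately show "integrable lborel (\<lambda>x. LBINT t. norm ((\<lambda>(x, t). B x t) (x, t)))"
      by simp
    show "AE x in lborel. integrable lborel (\<lambda>t. (\<lambda>(x, t). B x t) (x, t))"
      unfolding B_def using f_abs by auto
  qed
  show ?thesis
  proof (rule Bochner_Integration.integrable_bound[OF B_int])
    show "(\<lambda>(x, t). if 0 \<le> t \<and> t \<le> x \<and> x \<le> 1 then complex_of_real (f t) * g x else 0)
        \<in> borel_measurable (lborel \<Otimes>\<^sub>M lborel)"
      by measurable
    have "norm (if 0 \<le> t \<and> t \<le> x \<and> x \<le> 1 then complex_of_real (f t) * g x else 0) \<le> norm (B x t)"
      for x t
    proof (cases "0 \<le> t \<and> t \<le> x \<and> x \<le> 1")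
      case True
      then have "x \<in> {0..1}" by simp
      with C have "norm (g x) \<le> \<bar>C\<bar>" by (meson abs_ge_self order_trans)
      then have "\<bar>f t\<bar> * norm (g x) \<le> \<bar>f t\<bar> * \<bar>C\<bar>" by (rule mult_left_mono) simp
      then show ?thesis using True by (simp add: B_def norm_mult abs_mult)
    qed auto
    then show "AE p in lborel \<Otimes>\<^sub>M lborel.
        norm ((\<lambda>(x, t). if 0 \<le> t \<and> t \<le> x \<and> x \<le> 1 then complex_of_real (f t) * g x else 0) p)
        \<le> norm ((\<lambda>(x, t). B x t) p)"
      by (auto split: prod.splits)
  qed
qed

lemma set_integral_antideriv_mult:
  fixes g :: "real \<Rightarrow> complex"
  assumes g: "continuous_on UNIV g"
  shows "(CLINT x:{0..1}|lborel. complex_of_real (antideriv f x) * g x) =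
    (CLINT t:{0..1}|lborel. complex_of_real (f t) * (CLINT x:{t..1}|lborel. g x))"
proof -
  define H where "H x t = (if 0 \<le> t \<and> t \<le> x \<and> x \<le> 1 then complex_of_real (f t) * g x else 0)"
    for x t
  have H_int: "integrable (lborel \<Otimes>\<^sub>M lborel) (\<lambda>(x, t). H x t)"
    unfolding H_def by (rule integrable_antideriv_kernel[OF g])
  have inner_t: "(LBINT t. H x t) = indicator {0..1} x *\<^sub>R (complex_of_real (antideriv f x) * g x)" for x
  proof (cases "x \<in> {0..1}")
    case True
    then have "(LBINT t. H x t) = (CLINT t:{0..x}|lborel. complex_of_real (f t) * g x)"
      unfolding H_def set_lebesgue_integral_def
      by (intro Bochner_Integration.integral_cong) (auto simp: indicator_def)
    also have "\<dots> = complex_of_real (antideriv f x) * g x"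
      unfolding antideriv_def by (simp add: set_integral_complex_of_real)
    finally show ?thesis using True by simp
  next
    case False
    then have "H x = (\<lambda>_. 0)" by (auto simp: H_def)
    then show ?thesis using False by simp
  qed
  have inner_x: "(LBINT x. H x t) =
      indicator {0..1} t *\<^sub>R (complex_of_real (f t) * (CLINT x:{t..1}|lborel. g x))" for t
  proof (cases "t \<in> {0..1}")
    case True
    then have "(LBINT x. H x t) = (CLINT x:{t..1}|lborel. complex_of_real (f t) * g x)"
      unfolding H_def set_lebesgue_integral_def
      by (intro Bochner_Integration.integral_cong) (auto simp: indicator_def)
    then show ?thesis using True by simp
  next
    case False
    then have "(\<lambda>x. H x t) = (\<lambda>_. 0)" by (auto simp: H_def)
    then show ?thesis using False by simp
  qed
  have "(CLINT x:{0..1}|lborel. complex_of_real (antideriv f x) * g x) = (LBINT x. LBINT t. H x t)"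
    unfolding inner_t set_lebesgue_integral_def ..
  also have "\<dots> = (LBINT t. LBINT x. H x t)"
    by (rule lborel_pair.Fubini_integral[OF H_int, symmetric])
  also have "\<dots> = (CLINT t:{0..1}|lborel. complex_of_real (f t) * (CLINT x:{t..1}|lborel. g x))"
    unfolding inner_x set_lebesgue_integral_def ..
  finally show ?thesis .
qed

lemma has_integral_antideriv_mult_fourier_exp:
  assumes theta0: "fourier_coeff f 0 = 0" and k: "k \<noteq> 0"
  shows "((\<lambda>x. complex_of_real (antideriv f x) * fourier_exp (- k) x) has_integral
    antideriv_coeff f k) {0..1}"
proof -
  define c where "c = complex_of_real (2 * pi * real_of_int (- k)) * \<i>"
  have "c \<noteq> 0" using k by (simp add: c_def)
  have tail: "(CLINT x:{t..1}|lborel. fourier_exp (- k) x) = (1 - fourier_exp (- k) t) / c"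
    if "t \<in> {0..1}" for t
  proof -
    have "(CLINT x:{t..1}|lborel. fourier_exp (- k) x) = integral {t..1} (fourier_exp (- k))"
      by (intro set_borel_integral_eq_integral(2))
        (simp add: set_integrable_def borel_integrable_compact continuous_on_fourier_exp)
    also have "\<dots> = (1 - fourier_exp (- k) t) / c"
      using has_integral_fourier_exp[of t 1 "- k"] that k unfolding c_def
      by (intro integral_unique) simp
    finally show ?thesis .
  qed
  have f_int: "set_integrable lborel {0..1} (\<lambda>t. complex_of_real (f t))"
    using set_integrable_mult_continuous[OF meas int, of "\<lambda>_. 1::complex"] by simp
  have fe_int: "set_integrable lborel {0..1} (\<lambda>t. complex_of_real (f t) * fourier_exp (- k) t)"
    by (rule set_integrable_mult_continuous[OF meas int continuous_on_fourier_exp])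
  have "(CLINT x:{0..1}|lborel. complex_of_real (antideriv f x) * fourier_exp (- k) x) =
      (CLINT t:{0..1}|lborel. (complex_of_real (f t) - complex_of_real (f t) * fourier_exp (- k) t) / c)"
    unfolding set_integral_antideriv_mult[OF continuous_on_fourier_exp]
    by (intro set_lebesgue_integral_cong) (auto simp: tail right_diff_distrib diff_divide_distrib)
  also have "\<dots> = ((CLINT t:{0..1}|lborel. complex_of_real (f t)) -
      (CLINT t:{0..1}|lborel. complex_of_real (f t) * fourier_exp (- k) t)) / c"
    unfolding set_integral_divide_zero set_integral_diff(2)[OF f_int fe_int] ..
  also have "\<dots> = (fourier_coeff f 0 - fourier_coeff f k) / c"
    by (simp add: fourier_coeff_eq_set_integral)
  also have "\<dots> = antideriv_coeff f k"
    using theta0 by (simp add: antideriv_coeff_def c_def)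
  finally have eq: "(CLINT x:{0..1}|lborel. complex_of_real (antideriv f x) * fourier_exp (- k) x) =
      antideriv_coeff f k" .
  have "set_integrable lborel {0..1}
      (\<lambda>x. complex_of_real (antideriv f x) * fourier_exp (- k) x)"
    unfolding set_integrable_def
    using continuous_on_antideriv
    by (intro borel_integrable_compact compact_Icc continuous_intros)
  note conv = set_borel_integral_eq_integral[OF this]
  show ?thesis
    using integrable_integral[OF conv(1)] unfolding conv(2)[symmetric] eq .
qed

end

definition trig_series :: "(int \<Rightarrow> complex) \<Rightarrow> real \<Rightarrow> complex" where
  "trig_series a x = (\<Sum>\<^sub>\<infinity>j. a j * fourier_exp j x)"

context
  fixes a :: "int \<Rightarrow> complex"
  assumes abs_summable: "(\<lambda>j. norm (a j)) summable_on UNIV"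
begin

lemma has_sum_trig_series: "((\<lambda>j. a j * fourier_exp j x) has_sum trig_series a x) UNIV"
proof -
  have "(\<lambda>j. norm (a j * fourier_exp j x)) summable_on UNIV"
    using abs_summable by (simp add: norm_mult)
  then show ?thesis
    unfolding trig_series_def by (rule has_sum_infsum[OF abs_summable_summable])
qed

lemma uniform_limit_trig_series_mult:
  "uniform_limit UNIV (\<lambda>X y. \<Sum>j\<in>X. a j * fourier_exp (j + k) y)
     (\<lambda>y. trig_series a y * fourier_exp k y) (finite_subsets_at_top UNIV)"
proof (rule Weierstrass_m_test_general'[OF _ _ abs_summable])
  show "norm (a j * fourier_exp (j + k) y) \<le> norm (a j)" for j y
    by (simp add: norm_mult)
  show "((\<lambda>j. a j * fourier_exp (j + k) y) has_sum trig_series a y * fourier_exp k y) UNIV" for y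
    using has_sum_cmult_left[OF has_sum_trig_series, of y "fourier_exp k y"]
    by (simp add: fourier_exp_mult[symmetric] mult.assoc)
qed

lemma continuous_on_trig_series: "continuous_on UNIV (trig_series a)"
proof (rule uniform_limit_theorem)
  show "uniform_limit UNIV (\<lambda>X y. \<Sum>j\<in>X. a j * fourier_exp (j + 0) y) (trig_series a)
      (finite_subsets_at_top UNIV)"
    using uniform_limit_trig_series_mult[of 0] by simp
  show "\<forall>\<^sub>F X in finite_subsets_at_top UNIV.
      continuous_on UNIV (\<lambda>y. \<Sum>j\<in>X. a j * fourier_exp (j + 0) y)"
    by (intro always_eventually allI continuous_on_sum continuous_on_mult continuous_on_const
        continuous_on_fourier_exp)
qed simp

lemma trig_series_at_1: "trig_series a 1 = trig_series a 0"
  by (simp add: trig_series_def)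

lemma has_integral_trig_series_mult:
  "((\<lambda>x. trig_series a x * fourier_exp (- k) x) has_integral a k) {0..1}"
proof -
  let ?F = "finite_subsets_at_top (UNIV :: int set)"
  define b where "b j = a j * (if j = k then 1 else 0)" for j
  have u: "uniform_limit {0..1} (\<lambda>X y. \<Sum>j\<in>X. a j * fourier_exp (j + - k) y)
      (\<lambda>y. trig_series a y * fourier_exp (- k) y) ?F"
    by (rule uniform_limit_on_subset[OF uniform_limit_trig_series_mult]) simp
  obtain I J where
    I: "\<And>X. ((\<lambda>y. \<Sum>j\<in>X. a j * fourier_exp (j + - k) y) has_integral I X) {0..1}" and
    J: "((\<lambda>y. trig_series a y * fourier_exp (- k) y) has_integral J) {0..1}" and
    IJ: "(I \<longlongrightarrow> J) ?F"
    by (rule uniform_limit_integral[OF u])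
      (auto intro!: continuous_on_sum continuous_on_mult continuous_on_const continuous_on_fourier_exp)
  have "I X = sum b X" if "finite X" for X
  proof -
    have "((\<lambda>y. a j * fourier_exp (j + - k) y) has_integral b j) {0..1}" for j
      unfolding b_def using has_integral_mult_right[OF has_integral_fourier_exp_01[of "j + - k"], of "a j"]
      by simp
    then have "((\<lambda>y. \<Sum>j\<in>X. a j * fourier_exp (j + - k) y) has_integral sum b X) {0..1}"
      using that by (intro has_integral_sum) auto
    with I show ?thesis by (rule has_integral_unique)
  qed
  then have "(sum b \<longlongrightarrow> J) ?F"
    using IJ by (subst tendsto_cong[OF eventually_finite_subsets_at_top_weakI]) auto
  then have "(b has_sum J) UNIV" unfolding has_sum_def .
  moreover have "(b has_sum a k) UNIV"
    by (rule has_sum_finite_neutralI[of "{k}"]) (auto simp: b_def)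
  ultimately have "J = a k" by (rule has_sum_unique)
  with J show ?thesis by simp
qed

end

text \<open>Both sides vanish at \<open>0\<close> and \<open>1\<close> and share the Fourier coefficients of nonzero order, so
  all Fourier coefficients of their difference minus its mean vanish.\<close>
lemma antideriv_eq_trig_series:
  fixes f :: "real \<Rightarrow> real"
  assumes meas: "f \<in> borel_measurable lborel" and int: "set_integrable lborel {0..1} f"
    and theta0: "fourier_coeff f 0 = 0"
    and abs_summable: "(\<lambda>j. norm (antideriv_coeff f j)) summable_on UNIV"
    and x: "x \<in> {0..1}"
  shows "complex_of_real (antideriv f x) =
    trig_series (antideriv_coeff f) x - trig_series (antideriv_coeff f) 0"
proof -
  define D where "D y = complex_of_real (antideriv f y) - trig_series (antideriv_coeff f) y" for y
  have D_cont: "continuous_on {0..1} D"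
    unfolding D_def
    using continuous_on_antideriv[OF meas int]
      continuous_on_subset[OF continuous_on_trig_series[OF abs_summable]]
    by (intro continuous_intros) auto
  define d where "d = integral {0..1} D"
  have D_int: "(D has_integral d) {0..1}"
    unfolding d_def by (intro integrable_integral integrable_continuous_real D_cont)
  have coeffs: "((\<lambda>y. (D y - d) * fourier_exp k y) has_integral 0) {0..1}" for k
  proof (cases "k = 0")
    case True
    then show ?thesis
      using has_integral_diff[OF D_int has_integral_const_real[of d 0 1]] by simp
  next
    case False
    have "((\<lambda>y. complex_of_real (antideriv f y) * fourier_exp (- (- k)) y -
        trig_series (antideriv_coeff f) y * fourier_exp (- (- k)) y - d * fourier_exp k y)
        has_integral antideriv_coeff f (- k) - antideriv_coeff f (- k) - d * 0) {0..1}"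
      using False has_integral_fourier_exp_01[of k]
      by (intro has_integral_diff has_integral_mult_right
          has_integral_antideriv_mult_fourier_exp[OF meas int theta0]
          has_integral_trig_series_mult[OF abs_summable]) auto
    then show ?thesis by (simp add: D_def algebra_simps)
  qed
  have D01: "D 0 = D 1"
    using antideriv_1[OF meas int] theta0 trig_series_at_1[OF abs_summable]
    by (simp add: D_def antideriv_0[OF meas int])
  have "D y - d = 0" if "y \<in> {0..1}" for y
  proof (rule fourier_coeffs_eq_0_imp_eq_0[OF _ _ coeffs that])
    show "continuous_on {0..1} (\<lambda>y. D y - d)"
      using D_cont by (intro continuous_on_diff continuous_on_const)
  qed (simp add: D01)
  then have "D x = D 0" using x by force
  then show ?thesis
    by (simp add: D_def antideriv_0[OF meas int]) (simp add: algebra_simps)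
qed

section \<open>Summing the squared increments over the cells\<close>

lemma has_sum_sum:
  fixes g :: "'i \<Rightarrow> 'a \<Rightarrow> 'b::topological_comm_monoid_add"
  assumes "finite I" "\<And>i. i \<in> I \<Longrightarrow> (g i has_sum s i) A"
  shows "((\<lambda>x. \<Sum>i\<in>I. g i x) has_sum (\<Sum>i\<in>I. s i)) A"
  using assms by (induction I rule: finite_induct) (auto intro: has_sum_add)

lemma has_sum_mult_abs_summable:
  fixes x y :: "'a \<Rightarrow> 'b::{banach, real_normed_field}"
  assumes x: "(\<lambda>j. norm (x j)) summable_on UNIV" and y: "(\<lambda>k. norm (y k)) summable_on UNIV"
  shows "((\<lambda>(j, k). x j * y k) has_sum (infsum x UNIV * infsum y UNIV)) UNIV"
proof -
  have "(\<lambda>p. norm ((\<lambda>(j, k). x j * y k) p)) summable_on Sigma UNIV (\<lambda>_. UNIV)"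
  proof (subst Infinite_Sum.abs_summable_on_Sigma_iff, intro conjI ballI)
    show "(\<lambda>k. norm ((\<lambda>(j, k). x j * y k) (j, k))) summable_on UNIV" for j
      using summable_on_cmult_right[OF y, of "norm (x j)"] by (simp add: norm_mult)
    have "(\<lambda>j. norm (x j) * (\<Sum>\<^sub>\<infinity>k. norm (y k))) summable_on UNIV"
      by (rule summable_on_cmult_left[OF x])
    then show "(\<lambda>j. norm (\<Sum>\<^sub>\<infinity>k. norm ((\<lambda>(j, k). x j * y k) (j, k)))) summable_on UNIV"
      by (simp add: norm_mult infsum_cmult_right' infsum_nonneg)
  qed
  then have sum: "(\<lambda>(j, k). x j * y k) summable_on Sigma UNIV (\<lambda>_. UNIV)"
    by (rule abs_summable_summable)
  have "infsum (\<lambda>(j, k). x j * y k) (Sigma UNIV (\<lambda>_. UNIV)) = (\<Sum>\<^sub>\<infinity>j. \<Sum>\<^sub>\<infinity>k. x j * y k)"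
    using infsum_Sigma_banach[OF sum] by simp
  also have "\<dots> = infsum x UNIV * infsum y UNIV"
    by (simp add: infsum_cmult_right' infsum_cmult_left')
  finally show ?thesis using sum by (simp add: has_sum_iff)
qed

lemma has_sum_mult_cnj_abs_summable:
  fixes b :: "'a \<Rightarrow> complex"
  assumes "(\<lambda>j. norm (b j)) summable_on UNIV"
  shows "((\<lambda>(j, j'). b j * cnj (b j')) has_sum infsum b UNIV * cnj (infsum b UNIV)) UNIV"
  using has_sum_mult_abs_summable[OF assms, of "\<lambda>j. cnj (b j)"] assms by simp

lemma abs_summable_mult_fourier_exp_diff:
  assumes "(\<lambda>j. norm (a j)) summable_on UNIV"
  shows "(\<lambda>j. norm (a j * (fourier_exp j x - fourier_exp j y))) summable_on UNIV"
proof (rule Infinite_Sum.abs_summable_on_comparison_test')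
  show "(\<lambda>j. 2 * norm (a j)) summable_on UNIV"
    using summable_on_cmult_right[OF assms] by simp
  show "norm (a j * (fourier_exp j x - fourier_exp j y)) \<le> 2 * norm (a j)" for j
  proof -
    have "norm (fourier_exp j x - fourier_exp j y) \<le> 2"
      using norm_triangle_ineq4[of "fourier_exp j x" "fourier_exp j y"] by simp
    from mult_left_mono[OF this norm_ge_zero[of "a j"]] show ?thesis
      by (simp add: norm_mult mult.commute)
  qed
qed

lemma sum_fourier_exp_increments_mult_cnj:
  assumes m: "m \<ge> (1::nat)"
  shows "(\<Sum>l=1..m. (fourier_exp j (real l / real m) - fourier_exp j ((real l - 1) / real m)) *
      cnj (fourier_exp j' (real l / real m) - fourier_exp j' ((real l - 1) / real m))) =
    (if int m dvd j - j' then of_nat m * complex_of_real (2 - 2 * cos (2 * pi * of_int j / real m))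
     else 0)"
proof -
  define E where "E i = fourier_exp i (1 / real m)" for i
  have incr: "fourier_exp i (real l / real m) - fourier_exp i ((real l - 1) / real m) =
      (E i - 1) * fourier_exp i ((real l - 1) / real m)" for i and l :: nat
  proof -
    have "real l / real m = (real l - 1) / real m + 1 / real m" by (simp add: diff_divide_distrib)
    then show ?thesis by (simp add: E_def fourier_exp_add algebra_simps)
  qed
  have "(\<Sum>l=1..m. (fourier_exp j (real l / real m) - fourier_exp j ((real l - 1) / real m)) *
      cnj (fourier_exp j' (real l / real m) - fourier_exp j' ((real l - 1) / real m))) =
      (E j - 1) * cnj (E j' - 1) * (\<Sum>l=1..m. fourier_exp (j - j') ((real l - 1) / real m))"
    unfolding incr sum_distrib_left by (intro sum.cong refl) (simp add: fourier_exp_diff mult_ac)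
  also have "\<dots> = (if int m dvd j - j' then (E j - 1) * cnj (E j - 1) * of_nat m else 0)"
  proof (cases "int m dvd j - j'")
    case True
    then have "E (j - j') = 1" using fourier_exp_eq_1_iff[OF m] by (simp add: E_def)
    then have "E j' = E j" using fourier_exp_mult[of "j - j'" "1 / real m" j'] by (simp add: E_def)
    then show ?thesis unfolding sum_fourier_exp_grid[OF m] using True by simp
  qed (unfold sum_fourier_exp_grid[OF m], simp)
  also have "(E j - 1) * cnj (E j - 1) = complex_of_real (2 - 2 * cos (2 * pi * of_int j / real m))"
    unfolding E_def fourier_exp_minus_1_mult_cnj by simp
  finally show ?thesis by (simp add: mult.commute)
qed

lemma infsum_infsum_congruent_pairs:
  fixes T :: "int \<times> int \<Rightarrow> 'a::banach" and m :: int
  assumes "m \<noteq> 0" and T: "(T has_sum s) UNIV"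
    and T0: "\<And>j j'. \<not> m dvd j - j' \<Longrightarrow> T (j, j') = 0"
  shows "(\<Sum>\<^sub>\<infinity>k. \<Sum>\<^sub>\<infinity>j. T (j, j - k * m)) = s"
proof -
  define Z where "Z = {(j, j'). m dvd j - j'}"
  define \<phi> where "\<phi> = (\<lambda>(k, j). (j, j - k * m))"
  have "bij_betw \<phi> UNIV Z"
  proof (rule bij_betwI[where g = "\<lambda>(j, j'). ((j - j') div m, j)"])
    show "\<phi> \<in> UNIV \<rightarrow> Z" by (auto simp: Z_def \<phi>_def)
    show "(\<lambda>(j, j'). ((j - j') div m, j)) \<in> Z \<rightarrow> UNIV" by simp
    show "(\<lambda>(j, j'). ((j - j') div m, j)) (\<phi> q) = q" for q
      using \<open>m \<noteq> 0\<close> by (cases q) (simp add: \<phi>_def)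
    show "\<phi> ((\<lambda>(j, j'). ((j - j') div m, j)) p) = p" if "p \<in> Z" for p
      using that by (cases p) (auto simp: Z_def \<phi>_def)
  qed
  moreover have "(T has_sum s) Z"
    using T by (subst has_sum_cong_neutral[of UNIV Z T T]) (auto simp: Z_def T0)
  ultimately have "((\<lambda>q. T (\<phi> q)) has_sum s) (Sigma UNIV (\<lambda>_. UNIV))"
    using has_sum_reindex_bij_betw by fastforce
  then show ?thesis
    using infsum_Sigma_banach[of "\<lambda>q. T (\<phi> q)" UNIV "\<lambda>_. UNIV"]
    by (auto simp: has_sum_iff \<phi>_def)
qed

lemma sum_norm_sq_trig_series_increments:
  fixes a :: "int \<Rightarrow> complex" and m :: nat
  assumes abs_summable: "(\<lambda>j. norm (a j)) summable_on UNIV" and m: "m \<ge> 1"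
  shows "complex_of_real (\<Sum>l=1..m.
      (cmod (trig_series a (real l / real m) - trig_series a ((real l - 1) / real m)))\<^sup>2) =
    of_nat m * (\<Sum>\<^sub>\<infinity>k::int. \<Sum>\<^sub>\<infinity>j::int. a j * cnj (a (j - k * int m)) *
      complex_of_real (2 - 2 * cos (2 * pi * of_int j / real m)))"
proof -
  define c where "c j = complex_of_real (2 - 2 * cos (2 * pi * of_int j / real m))" for j :: int
  define d where "d l j = fourier_exp j (real l / real m) - fourier_exp j ((real l - 1) / real m)"
    for l :: nat and j
  define S where "S l = trig_series a (real l / real m) - trig_series a ((real l - 1) / real m)"
    for l :: nat
  define T where "T = (\<lambda>(j, j'). \<Sum>l=1..m. a j * d l j * cnj (a j' * d l j'))"
  have abs_summable_d: "(\<lambda>j. norm (a j * d l j)) summable_on UNIV" for l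
    unfolding d_def by (rule abs_summable_mult_fourier_exp_diff[OF abs_summable])
  have has_sum_d: "((\<lambda>j. a j * d l j) has_sum S l) UNIV" for l
    using has_sum_add[OF has_sum_trig_series[OF abs_summable]
        has_sum_uminusI[OF has_sum_trig_series[OF abs_summable]]]
    by (simp add: d_def S_def right_diff_distrib)
  have "((\<lambda>(j, j'). a j * d l j * cnj (a j' * d l j')) has_sum S l * cnj (S l)) UNIV" for l
    using has_sum_mult_cnj_abs_summable[OF abs_summable_d[of l]] has_sum_d[of l, THEN infsumI]
    by (simp del: complex_cnj_mult)
  then have "((\<lambda>p. \<Sum>l=1..m. (\<lambda>(j, j'). a j * d l j * cnj (a j' * d l j')) p) has_sum
      (\<Sum>l=1..m. S l * cnj (S l))) UNIV"
    by (intro has_sum_sum) auto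
  moreover have "(\<lambda>p. \<Sum>l=1..m. (\<lambda>(j, j'). a j * d l j * cnj (a j' * d l j')) p) = T"
    by (auto simp: T_def)
  ultimately have "(T has_sum (\<Sum>l=1..m. S l * cnj (S l))) UNIV" by simp
  moreover have T_eq: "T (j, j') = a j * cnj (a j') * (if int m dvd j - j' then of_nat m * c j else 0)"
    for j j'
    unfolding T_def c_def d_def
    using sum_fourier_exp_increments_mult_cnj[OF m, of j j', symmetric]
    by (simp add: sum_distrib_left mult_ac)
  ultimately have "(\<Sum>\<^sub>\<infinity>k. \<Sum>\<^sub>\<infinity>j. T (j, j - k * int m)) = (\<Sum>l=1..m. S l * cnj (S l))"
    using m by (intro infsum_infsum_congruent_pairs) auto
  moreover have "T (j, j - k * int m) = of_nat m * (a j * cnj (a (j - k * int m)) * c j)" for j k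
    by (simp add: T_eq)
  moreover have "complex_of_real (\<Sum>l=1..m. (cmod (S l))\<^sup>2) = (\<Sum>l=1..m. S l * cnj (S l))"
    by (simp only: of_real_sum complex_norm_square)
  ultimately show ?thesis
    by (simp add: S_def c_def infsum_cmult_right')
qed

lemma cell_prob_eq_antideriv_diff:
  fixes f F :: "real \<Rightarrow> real"
  assumes int: "set_integrable lborel {0..1} f"
    and F_def: "\<forall>x\<in>{0..1}. F x = (LINT t:{0..x}|lborel. 1 + f t)"
    and m: "m \<ge> 1" and l: "l \<in> {1..m}"
  shows "cell_prob F m l - 1 / real m =
    antideriv f (real l / real m) - antideriv f ((real l - 1) / real m)"
proof -
  have F_eq: "F x = x + antideriv f x" if x: "x \<in> {0..1}" for x
  proof -
    have "set_integrable lborel {0..x} (\<lambda>_. 1::real)"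
      unfolding set_integrable_def by (rule borel_integrable_compact) auto
    moreover have "set_integrable lborel {0..x} f"
      by (rule set_integrable_subset[OF int]) (use x in auto)
    ultimately have "F x = (LINT t:{0..x}|lborel. 1) + antideriv f x"
      using F_def x unfolding antideriv_def by simp
    also have "(LINT t:{0..x}|lborel. 1) = x"
      using x by (simp add: set_integral_const)
    finally show ?thesis .
  qed
  have "real l / real m \<in> {0..1}" "(real l - 1) / real m \<in> {0..1}"
    using l m by (auto simp: field_simps)
  then show ?thesis
    unfolding cell_prob_def using m by (simp add: F_eq field_simps)
qed

lemma T_stat_eq_sum_norm_sq_increments:
  fixes f F :: "real \<Rightarrow> real"
  assumes meas: "f \<in> borel_measurable lborel" and L2: "set_integrable lborel {0..1} (\<lambda>x. (f x)\<^sup>2)"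
    and F_def: "\<forall>x\<in>{0..1}. F x = (LINT t:{0..x}|lborel. 1 + f t)"
    and theta0: "fourier_coeff f 0 = 0" and n: "n \<ge> 1" and m: "m \<ge> 1"
  shows "T_stat n m F / (real n * real m) = (\<Sum>l=1..m. (cmod
    (trig_series (antideriv_coeff f) (real l / real m) -
     trig_series (antideriv_coeff f) ((real l - 1) / real m)))\<^sup>2)"
proof -
  have int: "set_integrable lborel {0..1} f"
    using meas L2 by (rule square_integrable_imp_integrable_01)
  have "complex_of_real (cell_prob F m l - 1 / real m) =
      trig_series (antideriv_coeff f) (real l / real m) -
      trig_series (antideriv_coeff f) ((real l - 1) / real m)"
    if "l \<in> {1..m}" for l
  proof -
    have "real l / real m \<in> {0..1}" "(real l - 1) / real m \<in> {0..1}"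
      using that m by (auto simp: field_simps)
    then show ?thesis
      unfolding cell_prob_eq_antideriv_diff[OF int F_def m that]
      using antideriv_eq_trig_series[OF meas int theta0 abs_summable_antideriv_coeff[OF meas L2]]
      by simp
  qed
  then have "(cell_prob F m l - 1 / real m)\<^sup>2 = (cmod
      (trig_series (antideriv_coeff f) (real l / real m) -
       trig_series (antideriv_coeff f) ((real l - 1) / real m)))\<^sup>2"
    if "l \<in> {1..m}" for l
    using that by (metis norm_of_real power2_abs)
  then show ?thesis
    using n m unfolding T_stat_def by simp
qed

theorem lemma7:
  fixes f F :: "real \<Rightarrow> real" and n m :: nat
  assumes periodic: "\<forall>x. f (x + 1) = f x"
    and meas: "f \<in> borel_measurable lborel"
    and L2: "set_integrable lborel {0..1} (\<lambda>x. (f x)\<^sup>2)"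
    and dens_nonneg: "AE x in lborel. x \<in> {0..1} \<longrightarrow> 0 \<le> 1 + f x"
    and F_def: "\<forall>x\<in>{0..1}. F x = (LINT t:{0..x}|lborel. 1 + f t)"
    and theta0: "fourier_coeff f 0 = 0"
    and n: "n \<ge> 1" and m: "m \<ge> 1"
  shows "complex_of_real (T_stat n m F / (real n * real m)) =
    of_nat m * (\<Sum>\<^sub>\<infinity>k::int. \<Sum>\<^sub>\<infinity>j\<in>{j::int. j \<noteq> k * int m}.
        fourier_coeff f j * cnj (fourier_coeff f (j - k * int m))
        / complex_of_real (4 * pi\<^sup>2 * of_int j * of_int (j - k * int m))
        * complex_of_real (2 - 2 * cos (2 * pi * of_int j / real m)))"
proof -
  define a where "a = antideriv_coeff f"
  have inner: "(\<Sum>\<^sub>\<infinity>j::int. a j * cnj (a (j - k * int m)) *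
        complex_of_real (2 - 2 * cos (2 * pi * of_int j / real m))) =
      (\<Sum>\<^sub>\<infinity>j\<in>{j::int. j \<noteq> k * int m}.
        fourier_coeff f j * cnj (fourier_coeff f (j - k * int m))
        / complex_of_real (4 * pi\<^sup>2 * of_int j * of_int (j - k * int m))
        * complex_of_real (2 - 2 * cos (2 * pi * of_int j / real m)))" for k
    by (rule infsum_cong_neutral) (auto simp: a_def antideriv_coeff_mult_cnj)
  have "complex_of_real (T_stat n m F / (real n * real m)) = complex_of_real (\<Sum>l=1..m.
      (cmod (trig_series a (real l / real m) - trig_series a ((real l - 1) / real m)))\<^sup>2)"
    unfolding a_def T_stat_eq_sum_norm_sq_increments[OF meas L2 F_def theta0 n m] ..
  also have "\<dots> = of_nat m * (\<Sum>\<^sub>\<infinity>k::int. \<Sum>\<^sub>\<infinity>j::int. a j * cnj (a (j - k * int m)) *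
      complex_of_real (2 - 2 * cos (2 * pi * of_int j / real m)))"
    unfolding a_def using abs_summable_antideriv_coeff[OF meas L2] m
    by (rule sum_norm_sq_trig_series_increments)
  finally show ?thesis
    unfolding inner .
qed

end
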